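(* Let $h\ge 2$ be an integer and $\lambda_G,\lambda_L,\gamma>0$. Let $S=\{(a,b): a\ge 1,\ b\ge 1,\ a+b\le h\}\cup\{(0,1)^\ast\}$ and let $\mathbf{P}=(p_{s,t})_{s,t\in S}$, $\Phi=(\phi_{s,t})_{s,t\in S}$ be the matrices whose only non-zero entries are as follows: for $(a,b)\in S$ with $a\ge 1$, $p_{(a,b),(a-1,b+1)}=\frac{a\lambda_L}{a\lambda_L+\gamma}$ and $\phi_{(a,b),(a-1,b+1)}=\frac{a\lambda_L}{b(a\lambda_L+\gamma)}$ if $a>1$; $p_{(1,b),(0,1)^\ast}=\frac{\lambda_L}{\lambda_L+\gamma}$ and $\phi_{(1,b),(0,1)^\ast}=\frac{\lambda_L}{b(\lambda_L+\gamma)}$; $p_{(a,b),(a,b-1)}=\frac{(b-1)\gamma}{b(a\lambda_L+\gamma)}$ if $b\ge 2$; $\phi_{(a,b),(h-1,1)}=\frac{\lambda_G}{b(a\lambda_L+\gamma)}$; and $\phi_{(0,1)^\ast,(h-1,1)}=\lambda_G/\gamma$ (the row of $\mathbf{P}$ indexed by $(0,1)^\ast$ is zero). Let $\mathbf{M}=(\mathbf{I}-\mathbf{P})^{-1}\Phi$ and $\mu_G=\lambda_G/\gamma$. For $i=0,\ldots,h-1$ let $\mu_i$ be the mean number of infectives in generation $i$ of the single-household epidemic described in the context, and let $\mathbf{A}$ be the $h\times h$ matrix with first column $(\mu_G\mu_0,\mu_G\mu_1,\ldots,\mu_G\mu_{h-1})^\top$, entries $A_{i,i+1}=1$ for $i=1,\ldots,h-1$,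 and all other entries $0$. Then the largest (Perron–Frobenius) eigenvalue of $\mathbf{M}$ equals the largest eigenvalue of $\mathbf{A}$; that is, the basic reproduction number $R_0$ defined as the maximal eigenvalue of $\mathbf{M}$ coincides with the generational basic reproduction number $R_0^g$ (the maximal eigenvalue of $\mathbf{A}$).
   Context: Markovian SIR household epidemic: the population is partitioned into households of size $h$. Each infective remains infectious for an exponentially distributed time with rate $\gamma$ (independently); whilst infectious it makes global contacts at rate $\lambda_G$ with individuals chosen uniformly from the (large) population, each such contact in the early stages creating a new infectious household in state $(h-1,1)$, and makes contacts with each other given member of its household at rate $\lambda_L$; contacted susceptibles immediately become infectious. A state $(a,b)$ denotes a household with $a$ susceptibles and $b$ infectives; states with no susceptibles are amalgamated into $(0,1)^\ast$. $\mathbf{M}$ is the mean reproduction matrix: $m_{s,t}$ is the mean number of type-$t$ infectives generated by an individual infected as a member of a type-$s$ infectious unit. Single-household epidemic and generations: in a household with one initial infective and $h-1$ susceptibles evolving with local contacts only, the initial infective is in generation $0$, and an individual infected by a generation-$(i-1)$ infective is in generation $i$; $\mu_i$ is the expected number of generation-$i$ infectives. *)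

theory Defs
  imports "Jordan_Normal_Form.Matrix" "Jordan_Normal_Form.Char_Poly" "Jordan_Normal_Form.Gauss_Jordan_Elimination"
begin

text \<open>Markovian SIR epidemic in one household, local contacts only.
  State: s = number of susceptibles, c = list whose k-th entry is the number of
  currently infectious individuals of generation k.  Since all infectious periods
  are exponential (rate gamma) and each infective contacts each other household member
  at rate lambdaL, the embedded jump chain has the following transitions:
  a generation-k infective infects a susceptible at total rate lambdaL * s * c_k,
  creating a generation-(k+1) infective; a generation-k infective recovers at
  total rate gamma * c_k.
  gen_future lL g s c i = expected number of generation-i infections that occur
  in the future, starting from state (s,c).\<close>

function gen_future :: "real \<Rightarrow> real \<Rightarrow> nat \<Rightarrow> nat list \<Rightarrow> nat \<Rightarrow> real" where
  "gen_future lL g s c i =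
     (if sum_list c = 0 then 0 else
      (let R = (real s * lL + g) * real (sum_list c) in
        (\<Sum>k<length c.
            (if s > 0 then (lL * real s * real (c ! k) / R) *
               ((if i = Suc k then 1 else 0) + gen_future lL g (s - 1) (c[Suc k := Suc (c ! Suc k)]) i)
             else 0)
          + (if c ! k > 0 then (g * real (c ! k) / R) *
               gen_future lL g s (c[k := c ! k - 1]) i
             else 0))))"
  by pat_completeness auto
termination
proof (relation "measure (\<lambda>(lL, g, s, c, i). 2 * s + sum_list c)", goal_cases)
  case 1 then show ?case by auto
next
  case (2 lL g s c i R k)
  have "sum_list (c[Suc k := Suc (c ! Suc k)]) \<le> sum_list c + 1"
  proof (cases "Suc k < length c")
    case True then show ?thesis by (simp add: sum_list_update)
  next
    case False then show ?thesis by (simp add: list_update_beyond)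
  qed
  with 2 show ?case by auto
next
  case (3 lL g s c i R k)
  have "k < length c" using 3 by simp
  moreover have "c ! k \<le> sum_list c" using \<open>k < length c\<close> by (simp add: elem_le_sum_list)
  ultimately have "sum_list (c[k := c ! k - 1]) < sum_list c" using 3
    by (auto simp add: sum_list_update)
  then show ?case by auto
qed

definition gen_mean :: "nat \<Rightarrow> real \<Rightarrow> real \<Rightarrow> nat \<Rightarrow> real" where
  "gen_mean h lL g i =
     (if i = 0 then 1 else 0) + gen_future lL g (h - 1) (1 # replicate (h - 1) 0) i"

text \<open>Types (a,b) with a \<ge> 1, b \<ge> 1, a+b \<le> h; the amalgamated type (0,1)* is
  represented by the pair (0,1).\<close>
definition hh_states :: "nat \<Rightarrow> (nat \<times> nat) list" where
  "hh_states h = concat (map (\<lambda>a. map (\<lambda>b. (a, b)) [1..<h + 1 - a]) [1..<h]) @ [(0, 1)]"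

definition p_entry :: "real \<Rightarrow> real \<Rightarrow> nat \<times> nat \<Rightarrow> nat \<times> nat \<Rightarrow> real" where
  "p_entry lL g st st' = (case st of (a, b) \<Rightarrow>
     if a \<ge> 1 then
       (if a > 1 \<and> st' = (a - 1, b + 1) then real a * lL / (real a * lL + g) else 0)
     + (if a = 1 \<and> st' = (0, 1) then lL / (lL + g) else 0)
     + (if b \<ge> 2 \<and> st' = (a, b - 1) then (real b - 1) * g / (real b * (real a * lL + g)) else 0)
     else 0)"

definition phi_entry :: "nat \<Rightarrow> real \<Rightarrow> real \<Rightarrow> real \<Rightarrow> nat \<times> nat \<Rightarrow> nat \<times> nat \<Rightarrow> real" where
  "phi_entry h lG lL g st st' = (case st of (a, b) \<Rightarrow>
     if a \<ge> 1 then
       (if a > 1 \<and> st' = (a - 1, b + 1) then real a * lL / (real b * (real a * lL + g)) else 0)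
     + (if a = 1 \<and> st' = (0, 1) then lL / (real b * (lL + g)) else 0)
     + (if st' = (h - 1, 1) then lG / (real b * (real a * lL + g)) else 0)
     else (if st' = (h - 1, 1) then lG / g else 0))"

definition P_mat :: "nat \<Rightarrow> real \<Rightarrow> real \<Rightarrow> real mat" where
  "P_mat h lL g = (let S = hh_states h in
     mat (length S) (length S) (\<lambda>(i, j). p_entry lL g (S ! i) (S ! j)))"

definition Phi_mat :: "nat \<Rightarrow> real \<Rightarrow> real \<Rightarrow> real \<Rightarrow> real mat" where
  "Phi_mat h lG lL g = (let S = hh_states h in
     mat (length S) (length S) (\<lambda>(i, j). phi_entry h lG lL g (S ! i) (S ! j)))"

definition M_mat :: "nat \<Rightarrow> real \<Rightarrow> real \<Rightarrow> real \<Rightarrow> real mat" where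
  "M_mat h lG lL g = (let n = length (hh_states h) in
     the (mat_inverse (1\<^sub>m n - P_mat h lL g)) * Phi_mat h lG lL g)"

definition A_mat :: "nat \<Rightarrow> real \<Rightarrow> real \<Rightarrow> real \<Rightarrow> real mat" where
  "A_mat h lG lL g = mat h h (\<lambda>(i, j).
     (if j = 0 then (lG / g) * gen_mean h lL g i else 0) + (if j = i + 1 then 1 else 0))"

definition max_eigenvalue :: "real mat \<Rightarrow> real" where
  "max_eigenvalue A = Max {r. eigenvalue A r}"

end

(* Write z = 1 / r.  A positive r is an eigenvalue of the generational matrix A iff
   z * muG * G(z) = 1, where G(z) = sum_i mu_i z^i is the generating function of the generation
   sizes of the single-household epidemic.  Conditioning on the next event of that epidemic gives a
   recursion for G over the household types (a, b) which has the same triangular shape as the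
   row equations of Phi v = r (I - P) v, i.e. of M v = r v.  Hence the eigenvector of M for r > 0
   is, up to scaling, the vector of these generating functions, and it exists iff again
   z * muG * G(z) = 1.  So M and A have the same positive eigenvalues; the intermediate value
   theorem provides one, and therefore the two maximal eigenvalues coincide. *)

theory Submission
  imports Defs
begin

section \<open>Generation generating function of the household epidemic\<close>

declare gen_future.simps [simp del]

text \<open>With \<open>s\<close> susceptibles and \<open>n\<close> infectives left, \<open>lineage_gf z lL g s n\<close> is the
  expected sum of \<open>z ^ (generation of d - generation of i)\<close> over a given current infective \<open>i\<close>
  and all its future descendants \<open>d\<close>.  The recursion conditions on the next event: recovery of
  \<open>i\<close>; an infection, made by \<open>i\<close> with probability \<open>1 / n\<close> (adding a descendant one generation
  later, whence the factor \<open>1 + z / n\<close>); or recovery of one of the other \<open>n - 1\<close> infectives.\<close>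

fun lineage_gf :: "real \<Rightarrow> real \<Rightarrow> real \<Rightarrow> nat \<Rightarrow> nat \<Rightarrow> real" where
  "lineage_gf z lL g 0 n = 1"
| "lineage_gf z lL g (Suc s) 0 = 0"
| "lineage_gf z lL g (Suc s) (Suc m) =
     g / (real (Suc m) * (real (Suc s) * lL + g))
   + real (Suc s) * lL / (real (Suc s) * lL + g) * (1 + z / real (Suc m)) * lineage_gf z lL g s (Suc (Suc m))
   + real m * g / (real (Suc m) * (real (Suc s) * lL + g)) * lineage_gf z lL g (Suc s) m"

lemma lineage_gf_rec:
  assumes "s > 0" "n > 0"
  shows "lineage_gf z lL g s n =
     g / (real n * (real s * lL + g))
   + real s * lL / (real s * lL + g) * (1 + z / real n) * lineage_gf z lL g (s - 1) (n + 1)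
   + (real n - 1) * g / (real n * (real s * lL + g)) * lineage_gf z lL g s (n - 1)"
  using assms by (cases s; cases n) auto

definition gen_weight :: "real \<Rightarrow> nat list \<Rightarrow> real" where
  "gen_weight z c = (\<Sum>k<length c. real (c ! k) * z ^ k)"

definition future_gf :: "real \<Rightarrow> real \<Rightarrow> real \<Rightarrow> nat \<Rightarrow> nat list \<Rightarrow> real" where
  "future_gf z lL g s c = (\<Sum>i<length c. z ^ i * gen_future lL g s c i)"

text \<open>\<open>gen_future\<close> silently drops an infection whose generation index is \<open>length c\<close>, since a list
  update beyond the end is the identity; \<open>gens_fit s c\<close> leaves room for the at most \<open>s\<close> further
  generations.\<close>

definition gens_fit :: "nat \<Rightarrow> nat list \<Rightarrow> bool" where
  "gens_fit s c \<longleftrightarrow> (\<forall>k<length c. 0 < c ! k \<longrightarrow> k + s < length c)"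

lemma gen_weight_incr:
  assumes "j < length c"
  shows "gen_weight z (c[j := Suc (c ! j)]) = gen_weight z c + z ^ j"
proof -
  have "gen_weight z (c[j := Suc (c ! j)]) = (\<Sum>k<length c. real (c ! k) * z ^ k + (if k = j then z ^ j else 0))"
    unfolding gen_weight_def by (intro sum.cong) (auto simp: nth_list_update algebra_simps)
  then show ?thesis
    using assms by (simp add: gen_weight_def sum.distrib)
qed

lemma gen_weight_decr:
  assumes "j < length c" "c ! j > 0"
  shows "gen_weight z (c[j := c ! j - 1]) = gen_weight z c - z ^ j"
proof -
  have "gen_weight z (c[j := c ! j - 1]) = (\<Sum>k<length c. real (c ! k) * z ^ k - (if k = j then z ^ j else 0))"
    unfolding gen_weight_def using assms
    by (intro sum.cong) (auto simp: nth_list_update algebra_simps of_nat_diff)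
  then show ?thesis
    using assms by (simp add: gen_weight_def sum_subtractf)
qed

lemma future_gf_empty:
  assumes "sum_list c = 0"
  shows "future_gf z lL g s c = 0"
  using assms by (simp add: future_gf_def gen_future.simps)

lemma future_gf_unfold:
  fixes lL g :: real and s :: nat
  assumes "sum_list c \<noteq> 0"
  defines "R \<equiv> (real s * lL + g) * real (sum_list c)"
  shows "future_gf z lL g s c = (\<Sum>k<length c.
      (if s > 0 then lL * real s * real (c ! k) / R *
         ((if Suc k < length c then z ^ Suc k else 0)
          + future_gf z lL g (s - 1) (c[Suc k := Suc (c ! Suc k)])) else 0)
    + (if c ! k > 0 then g * real (c ! k) / R * future_gf z lL g s (c[k := c ! k - 1]) else 0))"
proof -
  define N where "N = length c"
  define T where "T i k =
      (if s > 0 then lL * real s * real (c ! k) / R *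
         ((if i = Suc k then 1 else 0) + gen_future lL g (s - 1) (c[Suc k := Suc (c ! Suc k)]) i) else 0)
    + (if c ! k > 0 then g * real (c ! k) / R * gen_future lL g s (c[k := c ! k - 1]) i else 0)" for i k
  have "gen_future lL g s c i = (\<Sum>k<N. T i k)" for i
    unfolding N_def T_def R_def
    by (subst gen_future.simps, subst if_not_P[OF assms(1)], simp only: Let_def)
  then have "future_gf z lL g s c = (\<Sum>i<N. z ^ i * (\<Sum>k<N. T i k))"
    unfolding future_gf_def N_def by simp
  also have "\<dots> = (\<Sum>k<N. \<Sum>i<N. z ^ i * T i k)"
    unfolding sum_distrib_left by (rule sum.swap)
  also have "\<dots> = (\<Sum>k<N.
      (if s > 0 then lL * real s * real (c ! k) / R *
         ((if Suc k < N then z ^ Suc k else 0)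
          + future_gf z lL g (s - 1) (c[Suc k := Suc (c ! Suc k)])) else 0)
    + (if c ! k > 0 then g * real (c ! k) / R * future_gf z lL g s (c[k := c ! k - 1]) else 0))"
    unfolding T_def future_gf_def N_def
    by (intro sum.cong refl)
       (simp add: sum.distrib sum_distrib_left algebra_simps if_distrib[of "\<lambda>x. _ * x"] flip: sum_divide_distrib cong: if_cong)
  finally show ?thesis unfolding N_def .
qed

lemma future_gf_from_successors:
  fixes lL g z V_inf V_rec :: real and s :: nat and c :: "nat list"
  defines "W \<equiv> gen_weight z c" and "n \<equiv> sum_list c" and "q \<equiv> real s * lL + g"
  assumes "n \<noteq> 0" "q \<noteq> 0" "gens_fit s c"
    and infect: "\<And>k. k < length c \<Longrightarrow> 0 < c ! k \<Longrightarrow> 0 < s \<Longrightarrow>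
      future_gf z lL g (s - 1) (c[Suc k := Suc (c ! Suc k)]) = (W + z ^ Suc k) * (V_inf - 1)"
    and recover: "\<And>k. k < length c \<Longrightarrow> 0 < c ! k \<Longrightarrow>
      future_gf z lL g s (c[k := c ! k - 1]) = (W - z ^ k) * (V_rec - 1)"
  shows "future_gf z lL g s c =
    ((lL * real s * (V_inf - 1) + g * (V_rec - 1)) * real n + lL * real s * z * V_inf - g * (V_rec - 1)) * W / (q * real n)"
proof -
  define R where "R = q * real n"
  define \<alpha> where "\<alpha> = (lL * real s * (V_inf - 1) + g * (V_rec - 1)) * W / R"
  define \<beta> where "\<beta> = (lL * real s * z * V_inf - g * (V_rec - 1)) / R"
  have R: "R \<noteq> 0"
    unfolding R_def using assms(4,5) by simp
  have "(if s > 0 then lL * real s * real (c ! k) / R *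
           ((if Suc k < length c then z ^ Suc k else 0)
            + future_gf z lL g (s - 1) (c[Suc k := Suc (c ! Suc k)])) else 0)
      + (if c ! k > 0 then g * real (c ! k) / R * future_gf z lL g s (c[k := c ! k - 1]) else 0)
      = real (c ! k) * (\<alpha> + \<beta> * z ^ k)" if k: "k < length c" for k
  proof (cases "c ! k = 0")
    case False
    then have ck: "0 < c ! k"
      by simp
    show ?thesis
    proof (cases "s = 0")
      case True
      then show ?thesis
        using R unfolding recover[OF k ck] \<alpha>_def \<beta>_def by (simp add: field_simps)
    next
      case False
      then have s: "0 < s"
        by simp
      moreover have "Suc k < length c"
        using assms(6) k ck s unfolding gens_fit_def by fastforce
      ultimately show ?thesis
        using R unfolding infect[OF k ck s] recover[OF k ck] \<alpha>_def \<beta>_def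
        by (simp add: field_simps)
    qed
  qed simp
  then have "future_gf z lL g s c = (\<Sum>k<length c. real (c ! k) * (\<alpha> + \<beta> * z ^ k))"
    using future_gf_unfold[where c = c and s = s and lL = lL and g = g and z = z] assms(4)
    unfolding n_def[symmetric] q_def[symmetric] R_def[symmetric] by simp
  also have "\<dots> = \<alpha> * real n + \<beta> * W"
    unfolding W_def gen_weight_def n_def
    by (simp add: sum_list_sum_nth atLeast0LessThan sum.distrib sum_distrib_left algebra_simps)
  also have "\<dots> = ((lL * real s * (V_inf - 1) + g * (V_rec - 1)) * real n + lL * real s * z * V_inf - g * (V_rec - 1))
      * W / (q * real n)"
    using R unfolding \<alpha>_def \<beta>_def R_def by (simp add: field_simps)
  finally show ?thesis .
qed

text \<open>The factor \<open>lineage_gf z lL g s n\<close> does not depend on the generations of the current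
  infectives: all of them behave alike, so each current infective of generation \<open>k\<close> contributes
  \<open>z ^ k\<close> times the same expected generation-weighted size of its own line of descent.\<close>

lemma gen_weight_add_future_gf:
  fixes lL g :: real
  assumes "lL > 0" "g > 0" "gens_fit s c"
  shows "gen_weight z c + future_gf z lL g s c = gen_weight z c * lineage_gf z lL g s (sum_list c)"
  using assms(3)
proof (induction "2 * s + sum_list c" arbitrary: s c rule: less_induct)
  case less
  define n W where "n = sum_list c" and "W = gen_weight z c"
  show ?case
  proof (cases "n = 0")
    case True
    then have "c ! k = 0" if "k < length c" for k
      using that elem_le_sum_list[of k c] unfolding n_def by simp
    then have "W = 0"
      unfolding W_def gen_weight_def by simp
    then show ?thesis
      using True future_gf_empty unfolding W_def n_def by simp
  next
    case False
    define q where "q = real s * lL + g"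
    define V1 where "V1 = lineage_gf z lL g (s - 1) (n + 1)"
    define V2 where "V2 = lineage_gf z lL g s (n - 1)"
    have q: "q > 0"
      unfolding q_def using assms(1,2) by (simp add: add_nonneg_pos)
    have "future_gf z lL g (s - 1) (c[Suc k := Suc (c ! Suc k)]) = (W + z ^ Suc k) * (V1 - 1)"
      if k: "k < length c" "0 < c ! k" and s: "0 < s" for k
    proof -
      define c' where "c' = c[Suc k := Suc (c ! Suc k)]"
      have ks: "k + s < length c"
        using less.prems k unfolding gens_fit_def by blast
      then have k1: "Suc k < length c"
        using s by simp
      have "gens_fit (s - 1) c'"
        using less.prems ks k1 unfolding gens_fit_def c'_def
        by (auto simp: nth_list_update split: if_splits)
      moreover have "sum_list c' = n + 1"
        using k1 unfolding c'_def n_def by (simp add: sum_list_update)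
      ultimately have "gen_weight z c' + future_gf z lL g (s - 1) c' = gen_weight z c' * V1"
        using less.hyps[of "s - 1" c'] s unfolding V1_def n_def by simp
      moreover have "gen_weight z c' = W + z ^ Suc k"
        using k1 gen_weight_incr unfolding c'_def W_def by blast
      ultimately show ?thesis
        unfolding c'_def[symmetric] by (simp add: algebra_simps)
    qed
    moreover have "future_gf z lL g s (c[k := c ! k - 1]) = (W - z ^ k) * (V2 - 1)"
      if k: "k < length c" "0 < c ! k" for k
    proof -
      define c' where "c' = c[k := c ! k - 1]"
      have "gens_fit s c'"
        using less.prems k unfolding gens_fit_def c'_def
        by (auto simp: nth_list_update split: if_splits)
      moreover have "sum_list c' = n - 1" "sum_list c' < n"
        using k elem_le_sum_list[of k c] unfolding c'_def n_def by (simp_all add: sum_list_update)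
      ultimately have "gen_weight z c' + future_gf z lL g s c' = gen_weight z c' * V2"
        using less.hyps[of s c'] unfolding V2_def n_def by simp
      moreover have "gen_weight z c' = W - z ^ k"
        using k gen_weight_decr unfolding c'_def W_def by blast
      ultimately show ?thesis
        unfolding c'_def[symmetric] by (simp add: algebra_simps)
    qed
    ultimately have future: "future_gf z lL g s c =
        ((lL * real s * (V1 - 1) + g * (V2 - 1)) * real n + lL * real s * z * V1 - g * (V2 - 1)) * W / (q * real n)"
      using future_gf_from_successors[where V_inf = V1 and V_rec = V2] False q less.prems
      unfolding n_def W_def q_def by simp
    show ?thesis
    proof (cases "s = 0")
      case True
      then show ?thesis
        using future unfolding V2_def W_def n_def by simp
    next
      case False
      have rec: "lineage_gf z lL g s n = g / (real n * q) + real s * lL / q * (1 + z / real n) * V1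
          + (real n - 1) * g / (real n * q) * V2"
        using lineage_gf_rec[of s n z lL g] False \<open>n \<noteq> 0\<close> unfolding q_def V1_def V2_def by simp
      have g: "g = q - real s * lL"
        unfolding q_def by simp
      show ?thesis
        using q \<open>n \<noteq> 0\<close> unfolding W_def[symmetric] n_def[symmetric] future rec
        by (simp add: field_simps g)
    qed
  qed
qed

lemma gen_mean_gf:
  assumes "h \<ge> 1" "lL > 0" "g > 0"
  shows "(\<Sum>j<h. z ^ j * gen_mean h lL g j) = lineage_gf z lL g (h - 1) 1"
proof -
  define c where "c = (1::nat) # replicate (h - 1) 0"
  have len: "length c = h"
    unfolding c_def using assms(1) by simp
  have c_nth: "c ! k = (if k = 0 then 1 else 0)" if "k < h" for k
    unfolding c_def using that by (cases k) auto
  have "gen_weight z c = (\<Sum>k<h. if k = 0 then 1 else 0)"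
    unfolding gen_weight_def len by (intro sum.cong refl) (simp add: c_nth)
  then have "gen_weight z c = 1"
    using assms(1) by simp
  moreover have "gens_fit (h - 1) c"
    unfolding gens_fit_def len using c_nth by auto
  moreover have "sum_list c = 1"
    unfolding c_def by simp
  ultimately have "1 + future_gf z lL g (h - 1) c = lineage_gf z lL g (h - 1) 1"
    using gen_weight_add_future_gf[OF assms(2,3), of "h - 1" c z] by simp
  moreover have "(\<Sum>j<h. z ^ j * gen_mean h lL g j) = 1 + future_gf z lL g (h - 1) c"
    using assms(1) unfolding gen_mean_def future_gf_def len c_def[symmetric]
    by (simp add: distrib_left sum.distrib if_distrib[of "\<lambda>x. _ * x"] cong: if_cong)
  ultimately show ?thesis
    by simp
qed

lemma isCont_lineage_gf: "isCont (\<lambda>z. lineage_gf z lL g s n) x"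
proof (induction rule: lineage_gf.induct[where P = "\<lambda>_ _ _ s n. isCont (\<lambda>z. lineage_gf z lL g s n) x"])
  case (3 _ _ _ s m)
  then show ?case
    unfolding lineage_gf.simps by (intro continuous_intros) auto
qed simp_all

lemma lineage_gf_nonneg:
  assumes "z \<ge> 0" "lL > 0" "g > 0"
  shows "lineage_gf z lL g s n \<ge> 0"
proof (induction rule: lineage_gf.induct[where P = "\<lambda>_ _ _ s n. 0 \<le> lineage_gf z lL g s n"])
  case (3 _ _ _ s m)
  then show ?case
    using assms by (auto intro!: add_nonneg_nonneg mult_nonneg_nonneg divide_nonneg_nonneg)
qed simp_all

lemma lineage_gf_ge:
  assumes "z \<ge> 0" "lL > 0" "g > 0" "s \<ge> 1" "n \<ge> 1"
  shows "lineage_gf z lL g s n \<ge> g / (real n * (real s * lL + g))"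
proof -
  have "0 \<le> real s * lL / (real s * lL + g) * (1 + z / real n) * lineage_gf z lL g (s - 1) (n + 1)"
    "0 \<le> (real n - 1) * g / (real n * (real s * lL + g)) * lineage_gf z lL g s (n - 1)"
    using assms lineage_gf_nonneg[OF assms(1-3)] by (auto intro!: mult_nonneg_nonneg divide_nonneg_nonneg)
  then show ?thesis
    using lineage_gf_rec[of s n z lL g] assms(4,5) by simp
qed

lemma lineage_gf_root:
  assumes "h \<ge> 2" "lG > 0" "lL > 0" "g > 0"
  shows "\<exists>r>0. lG / (g * r) * lineage_gf (1 / r) lL g (h - 1) 1 = 1"
proof -
  define F where "F z = z * (lG / g) * lineage_gf z lL g (h - 1) 1" for z
  define c where "c = g / (real (h - 1) * lL + g)"
  have "c > 0"
    unfolding c_def using assms by (simp add: add_nonneg_pos)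
  define z1 where "z1 = g / (lG * c)"
  have "z1 > 0"
    unfolding z1_def using assms \<open>c > 0\<close> by simp
  have "z1 * (lG / g) * c = 1"
    unfolding z1_def using assms \<open>c > 0\<close> by (simp add: field_simps)
  moreover have "c \<le> lineage_gf z1 lL g (h - 1) 1"
    unfolding c_def using lineage_gf_ge[of z1 lL g "h - 1" 1] \<open>z1 > 0\<close> assms by simp
  ultimately have "1 \<le> F z1"
    unfolding F_def using \<open>z1 > 0\<close> assms
    by (metis mult_left_mono divide_pos_pos less_eq_real_def mult_pos_pos)
  moreover have "F 0 \<le> 1"
    unfolding F_def by simp
  moreover have "\<forall>z. 0 \<le> z \<and> z \<le> z1 \<longrightarrow> isCont F z"
    unfolding F_def by (intro allI impI continuous_intros isCont_lineage_gf)
  ultimately obtain z where z: "0 \<le> z" "z \<le> z1" "F z = 1"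
    using IVT[of F 0 1 z1] \<open>z1 > 0\<close> by auto
  then have "z > 0"
    unfolding F_def by (cases "z = 0") auto
  then show ?thesis
    using z(3) unfolding F_def by (intro exI[of _ "1 / z"]) (simp add: field_simps)
qed

section \<open>The generational matrix\<close>

definition renewal_mat :: "nat \<Rightarrow> (nat \<Rightarrow> 'a::comm_ring_1) \<Rightarrow> 'a mat" where
  "renewal_mat h c = mat h h (\<lambda>(i, j). (if j = 0 then c i else 0) + (if j = i + 1 then 1 else 0))"

lemma renewal_mat_mult_vec_nth:
  assumes "v \<in> carrier_vec h" "i < h"
  shows "(renewal_mat h c *\<^sub>v v) $ i = c i * v $ 0 + (if Suc i < h then v $ Suc i else 0)"
proof -
  have "(renewal_mat h c *\<^sub>v v) $ i =
      (\<Sum>j<h. (if j = 0 then c i * v $ j else 0) + (if j = Suc i then v $ j else 0))"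
    using assms unfolding renewal_mat_def
    by (simp add: scalar_prod_def atLeast0LessThan distrib_right if_distrib[of "\<lambda>x. x * _"] cong: if_cong)
  then show ?thesis
    using assms(2) by (simp add: sum.distrib)
qed

definition renewal_tail :: "nat \<Rightarrow> (nat \<Rightarrow> 'a::field) \<Rightarrow> 'a \<Rightarrow> nat \<Rightarrow> 'a" where
  "renewal_tail h c r i = (\<Sum>j\<in>{i..<h}. c j / r ^ (j + 1 - i))"

lemma renewal_tail_step:
  assumes "i < h" "r \<noteq> 0"
  shows "r * renewal_tail h c r i = c i + renewal_tail h c r (Suc i)"
proof -
  have "{i..<h} = insert i {Suc i..<h}"
    using assms(1) by auto
  then have "r * renewal_tail h c r i = c i + (\<Sum>j\<in>{Suc i..<h}. r * (c j / r ^ (j + 1 - i)))"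
    using assms(2) unfolding renewal_tail_def by (simp add: distrib_left sum_distrib_left)
  also have "(\<Sum>j\<in>{Suc i..<h}. r * (c j / r ^ (j + 1 - i))) = renewal_tail h c r (Suc i)"
    unfolding renewal_tail_def
  proof (rule sum.cong)
    fix j
    assume "j \<in> {Suc i..<h}"
    then have "j + 1 - i = Suc (j + 1 - Suc i)"
      by (simp add: Suc_diff_le)
    then show "r * (c j / r ^ (j + 1 - i)) = c j / r ^ (j + 1 - Suc i)"
      using assms(2) by simp
  qed simp
  finally show ?thesis .
qed

lemma renewal_eigenvector_nth:
  assumes "v \<in> carrier_vec h" "renewal_mat h c *\<^sub>v v = r \<cdot>\<^sub>v v" "r \<noteq> 0" "i < h"
  shows "v $ i = v $ 0 * renewal_tail h c r i"
  using assms(4)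
proof (induction "h - i" arbitrary: i)
  case 0
  then show ?case by simp
next
  case (Suc d)
  have "r * v $ i = c i * v $ 0 + (if Suc i < h then v $ Suc i else 0)"
    using arg_cong[OF assms(2), of "\<lambda>w. w $ i"] renewal_mat_mult_vec_nth[OF assms(1) Suc.prems] assms(1) Suc.prems
    by simp
  also have "\<dots> = v $ 0 * (c i + renewal_tail h c r (Suc i))"
  proof (cases "Suc i < h")
    case True
    then show ?thesis
      using Suc.hyps(1)[of "Suc i"] Suc.hyps(2) by (simp add: distrib_left)
  next
    case False
    then show ?thesis
      by (simp add: renewal_tail_def)
  qed
  also have "\<dots> = r * (v $ 0 * renewal_tail h c r i)"
    using renewal_tail_step[OF Suc.prems assms(3)] by simp
  finally show ?case
    using assms(3) by simp
qed

lemma eigenvalue_renewal_mat_iff: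
  fixes c :: "nat \<Rightarrow> 'a::field"
  assumes "h > 0" "r \<noteq> 0"
  shows "eigenvalue (renewal_mat h c) r \<longleftrightarrow> renewal_tail h c r 0 = 1"
proof
  assume "eigenvalue (renewal_mat h c) r"
  then obtain v where v: "v \<in> carrier_vec h" "v \<noteq> 0\<^sub>v h" "renewal_mat h c *\<^sub>v v = r \<cdot>\<^sub>v v"
    unfolding eigenvalue_def eigenvector_def renewal_mat_def by auto
  have "v $ 0 \<noteq> 0"
  proof
    assume "v $ 0 = 0"
    then have "v = 0\<^sub>v h"
      using renewal_eigenvector_nth[OF v(1,3) assms(2)] v(1) by (intro eq_vecI) auto
    with v(2) show False ..
  qed
  moreover have "v $ 0 = v $ 0 * renewal_tail h c r 0"
    using renewal_eigenvector_nth[OF v(1,3) assms(2,1)] .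
  ultimately show "renewal_tail h c r 0 = 1"
    by simp
next
  assume tail: "renewal_tail h c r 0 = 1"
  define v where "v = vec h (renewal_tail h c r)"
  have "renewal_mat h c *\<^sub>v v = r \<cdot>\<^sub>v v"
  proof (rule eq_vecI)
    fix i
    assume "i < dim_vec (r \<cdot>\<^sub>v v)"
    then have i: "i < h"
      unfolding v_def by simp
    have "renewal_tail h c r (Suc i) = (if Suc i < h then v $ Suc i else 0)"
      unfolding v_def renewal_tail_def by simp
    then show "(renewal_mat h c *\<^sub>v v) $ i = (r \<cdot>\<^sub>v v) $ i"
      using renewal_mat_mult_vec_nth[of v h i c] renewal_tail_step[OF i assms(2), of c] i tail assms(1)
      unfolding v_def by simp
  qed (simp add: v_def renewal_mat_def)
  moreover have "v \<noteq> 0\<^sub>v h"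
  proof
    assume "v = 0\<^sub>v h"
    then have "v $ 0 = 0"
      using assms(1) by simp
    then show False
      using assms(1) tail unfolding v_def by simp
  qed
  ultimately have "eigenvector (renewal_mat h c) v r"
    unfolding eigenvector_def by (simp add: v_def renewal_mat_def)
  then show "eigenvalue (renewal_mat h c) r"
    unfolding eigenvalue_def by blast
qed

lemma eigenvalue_A_mat_iff:
  assumes "h \<ge> 1" "lL > 0" "g > 0" "r > 0"
  shows "eigenvalue (A_mat h lG lL g) r \<longleftrightarrow> lG / (g * r) * lineage_gf (1 / r) lL g (h - 1) 1 = 1"
proof -
  have "A_mat h lG lL g = renewal_mat h (\<lambda>i. lG / g * gen_mean h lL g i)"
    unfolding A_mat_def renewal_mat_def by simp
  moreover have "renewal_tail h (\<lambda>i. lG / g * gen_mean h lL g i) r 0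
      = lG / (g * r) * (\<Sum>j<h. (1 / r) ^ j * gen_mean h lL g j)"
    unfolding renewal_tail_def
    by (simp add: atLeast0LessThan sum_distrib_left field_simps power_divide)
  ultimately show ?thesis
    using eigenvalue_renewal_mat_iff[of h r] gen_mean_gf[OF assms(1-3)] assms by simp
qed

lemma mat_inverse_if_det_nonzero:
  fixes A :: "'a::field mat"
  assumes "A \<in> carrier_mat n n" "det A \<noteq> 0"
  obtains B where "mat_inverse A = Some B" "A * B = 1\<^sub>m n" "B * A = 1\<^sub>m n" "B \<in> carrier_mat n n"
proof -
  have "A \<in> Units (ring_mat TYPE('a) n ())"
    by (rule det_non_zero_imp_unit[OF assms])
  then have "mat_inverse A \<noteq> None"
    using mat_inverse(1)[OF assms(1), of "()"] by blast
  then obtain B where "mat_inverse A = Some B"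
    by blast
  with that show ?thesis
    using mat_inverse(2)[OF assms(1)] by blast
qed

lemma eigenvalue_inverse_mult_iff:
  fixes B C F :: "'a::field mat"
  assumes B: "B \<in> carrier_mat n n" and C: "C \<in> carrier_mat n n" and F: "F \<in> carrier_mat n n"
    and BC: "B * C = 1\<^sub>m n" and CB: "C * B = 1\<^sub>m n"
  shows "eigenvalue (B * F) r \<longleftrightarrow> (\<exists>v\<in>carrier_vec n. v \<noteq> 0\<^sub>v n \<and> F *\<^sub>v v = r \<cdot>\<^sub>v (C *\<^sub>v v))"
proof -
  have "(B * F) *\<^sub>v v = r \<cdot>\<^sub>v v \<longleftrightarrow> F *\<^sub>v v = r \<cdot>\<^sub>v (C *\<^sub>v v)" if v: "v \<in> carrier_vec n" for v
  proof
    assume "(B * F) *\<^sub>v v = r \<cdot>\<^sub>v v"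
    then have "C *\<^sub>v ((B * F) *\<^sub>v v) = C *\<^sub>v (r \<cdot>\<^sub>v v)"
      by simp
    moreover have "C *\<^sub>v ((B * F) *\<^sub>v v) = (C * (B * F)) *\<^sub>v v"
      by (rule assoc_mult_mat_vec[symmetric]) (use B C F v in auto)
    moreover have "C * (B * F) = (C * B) * F"
      by (rule assoc_mult_mat[symmetric]) (use B C F in auto)
    moreover have "((C * B) * F) *\<^sub>v v = F *\<^sub>v v"
      using F v unfolding CB by simp
    ultimately show "F *\<^sub>v v = r \<cdot>\<^sub>v (C *\<^sub>v v)"
      using C v by (simp add: mult_mat_vec)
  next
    assume "F *\<^sub>v v = r \<cdot>\<^sub>v (C *\<^sub>v v)"
    then have "(B * F) *\<^sub>v v = B *\<^sub>v (r \<cdot>\<^sub>v (C *\<^sub>v v))"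
      using B F v by simp
    also have "\<dots> = r \<cdot>\<^sub>v ((B * C) *\<^sub>v v)"
      using B C v by (simp add: mult_mat_vec)
    also have "\<dots> = r \<cdot>\<^sub>v v"
      using v unfolding BC by simp
    finally show "(B * F) *\<^sub>v v = r \<cdot>\<^sub>v v" .
  qed
  moreover have "dim_row (B * F) = n"
    using B by simp
  ultimately show ?thesis
    unfolding eigenvalue_def eigenvector_def by auto
qed

lemma finite_eigenvalues:
  fixes A :: "'a::field mat"
  assumes "A \<in> carrier_mat n n"
  shows "finite {r. eigenvalue A r}"
proof -
  have "char_poly A \<noteq> 0"
    using degree_monic_char_poly[OF assms] by auto
  then show ?thesis
    using poly_roots_finite eigenvalue_root_char_poly[OF assms] by simp
qed

definition index_of :: "'s list \<Rightarrow> 's \<Rightarrow> nat" where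
  "index_of xs = the_inv_into {..<length xs} ((!) xs)"

definition vec_of_fun :: "'s list \<Rightarrow> ('s \<Rightarrow> 'a) \<Rightarrow> 'a vec" where
  "vec_of_fun xs w = vec (length xs) (\<lambda>i. w (xs ! i))"

definition mat_of_fun :: "'s list \<Rightarrow> ('s \<Rightarrow> 's \<Rightarrow> 'a) \<Rightarrow> 'a mat" where
  "mat_of_fun xs f = mat (length xs) (length xs) (\<lambda>(i, j). f (xs ! i) (xs ! j))"

lemma index_of_nth:
  assumes "distinct xs" "i < length xs"
  shows "index_of xs (xs ! i) = i"
  unfolding index_of_def using assms by (auto intro: the_inv_into_f_f inj_on_nth)

lemma index_of_less:
  assumes "distinct xs" "s \<in> set xs"
  shows "index_of xs s < length xs" and "xs ! index_of xs s = s"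
  using assms index_of_nth by (metis in_set_conv_nth)+

lemma vec_of_fun_index_of:
  assumes "distinct xs" "s \<in> set xs"
  shows "vec_of_fun xs w $ index_of xs s = w s"
  using index_of_less[OF assms] unfolding vec_of_fun_def by simp

lemma vec_of_fun_cong:
  "vec_of_fun xs w = vec_of_fun xs w' \<longleftrightarrow> (\<forall>s\<in>set xs. w s = w' s)"
  unfolding vec_of_fun_def all_set_conv_all_nth vec_eq_iff by simp

lemma vec_of_fun_surj:
  assumes "distinct xs" "v \<in> carrier_vec (length xs)"
  shows "vec_of_fun xs (\<lambda>s. v $ index_of xs s) = v"
  using assms unfolding vec_of_fun_def by (intro eq_vecI) (auto simp: index_of_nth)

lemma mat_of_fun_mult_vec_of_fun:
  fixes f :: "'s \<Rightarrow> 's \<Rightarrow> 'a::comm_semiring_0"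
  assumes "distinct xs" "s \<in> set xs"
  shows "(mat_of_fun xs f *\<^sub>v vec_of_fun xs w) $ index_of xs s = (\<Sum>t\<in>set xs. f s t * w t)"
proof -
  have "(mat_of_fun xs f *\<^sub>v vec_of_fun xs w) $ index_of xs s = (\<Sum>j<length xs. f s (xs ! j) * w (xs ! j))"
    using index_of_less[OF assms]
    by (simp add: mat_of_fun_def vec_of_fun_def scalar_prod_def atLeast0LessThan)
  also have "\<dots> = (\<Sum>t\<in>set xs. f s t * w t)"
    using sum.reindex_bij_betw[OF bij_betw_nth[OF assms(1) refl refl], of "\<lambda>t. f s t * w t"]
    by (simp add: atLeast0LessThan)
  finally show ?thesis .
qed

lemma mat_of_fun_carrier: "mat_of_fun xs f \<in> carrier_mat (length xs) (length xs)"
  unfolding mat_of_fun_def by simp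

lemma one_minus_mat_of_fun_mult_vec_of_fun:
  fixes P :: "'s \<Rightarrow> 's \<Rightarrow> 'a::comm_ring_1"
  assumes "distinct xs" "s \<in> set xs"
  shows "((1\<^sub>m (length xs) - mat_of_fun xs P) *\<^sub>v vec_of_fun xs w) $ index_of xs s
    = w s - (\<Sum>t\<in>set xs. P s t * w t)"
proof -
  have "(1\<^sub>m (length xs) - mat_of_fun xs P) *\<^sub>v vec_of_fun xs w
      = 1\<^sub>m (length xs) *\<^sub>v vec_of_fun xs w - mat_of_fun xs P *\<^sub>v vec_of_fun xs w"
    by (rule minus_mult_distrib_mat_vec) (auto simp: mat_of_fun_carrier vec_of_fun_def)
  then show ?thesis
    using index_of_less[OF assms] mat_of_fun_mult_vec_of_fun[OF assms] vec_of_fun_index_of[OF assms]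
    by (simp add: vec_of_fun_def mat_of_fun_def)
qed

lemma det_one_minus_mat_of_fun_nonzero:
  fixes P :: "'s \<Rightarrow> 's \<Rightarrow> 'a::field"
  assumes "distinct xs"
    and fixpoint_zero: "\<And>w. \<forall>s\<in>set xs. w s = (\<Sum>t\<in>set xs. P s t * w t) \<Longrightarrow> \<forall>s\<in>set xs. w s = 0"
  shows "det (1\<^sub>m (length xs) - mat_of_fun xs P) \<noteq> 0"
proof
  let ?n = "length xs"
  have C: "1\<^sub>m ?n - mat_of_fun xs P \<in> carrier_mat ?n ?n"
    using mat_of_fun_carrier by (rule minus_carrier_mat)
  assume "det (1\<^sub>m ?n - mat_of_fun xs P) = 0"
  then obtain v where v: "v \<in> carrier_vec ?n" "v \<noteq> 0\<^sub>v ?n" "(1\<^sub>m ?n - mat_of_fun xs P) *\<^sub>v v = 0\<^sub>v ?n"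
    unfolding det_0_iff_vec_prod_zero_field[OF C] by blast
  define w where "w s = v $ index_of xs s" for s
  have v_w: "v = vec_of_fun xs w"
    unfolding w_def using vec_of_fun_surj[OF assms(1) v(1)] by simp
  have "w s = (\<Sum>t\<in>set xs. P s t * w t)" if s: "s \<in> set xs" for s
    using v(3) index_of_less[OF assms(1) s] one_minus_mat_of_fun_mult_vec_of_fun[OF assms(1) s, of P w]
    unfolding v_w by simp
  then have "vec_of_fun xs w = vec_of_fun xs (\<lambda>_. 0)"
    using fixpoint_zero unfolding vec_of_fun_cong by blast
  then show False
    using v(2) unfolding v_w by (simp add: vec_of_fun_def zero_vec_def)
qed

lemma vec_eq_iff_index_of:
  assumes "distinct xs" "x \<in> carrier_vec (length xs)" "y \<in> carrier_vec (length xs)"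
  shows "x = y \<longleftrightarrow> (\<forall>s\<in>set xs. x $ index_of xs s = y $ index_of xs s)"
proof -
  obtain fx fy where "x = vec_of_fun xs fx" "y = vec_of_fun xs fy"
    using vec_of_fun_surj[OF assms(1,2)] vec_of_fun_surj[OF assms(1,3)] by metis
  then show ?thesis
    by (simp add: vec_of_fun_cong vec_of_fun_index_of[OF assms(1)])
qed

lemma vec_of_fun_eq_zero_iff: "vec_of_fun xs w = 0\<^sub>v (length xs) \<longleftrightarrow> (\<forall>s\<in>set xs. w s = 0)"
proof -
  have zero: "0\<^sub>v (length xs) = vec_of_fun xs (\<lambda>_. 0)"
    unfolding vec_of_fun_def by auto
  show ?thesis
    unfolding zero vec_of_fun_cong ..
qed

lemma eigenvalue_inverse_mult_mat_of_fun_iff: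
  fixes xs :: "'s list" and P F :: "'s \<Rightarrow> 's \<Rightarrow> 'a::field"
  defines "n \<equiv> length xs"
  assumes xs: "distinct xs" and B: "B \<in> carrier_mat n n"
    and "B * (1\<^sub>m n - mat_of_fun xs P) = 1\<^sub>m n" "(1\<^sub>m n - mat_of_fun xs P) * B = 1\<^sub>m n"
  shows "eigenvalue (B * mat_of_fun xs F) r \<longleftrightarrow>
    (\<exists>w. (\<exists>s\<in>set xs. w s \<noteq> 0) \<and>
      (\<forall>s\<in>set xs. (\<Sum>t\<in>set xs. F s t * w t) = r * (w s - (\<Sum>t\<in>set xs. P s t * w t))))"
proof -
  let ?C = "1\<^sub>m n - mat_of_fun xs P"
  have carrier: "mat_of_fun xs f \<in> carrier_mat n n" for f :: "'s \<Rightarrow> 's \<Rightarrow> 'a"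
    unfolding n_def by (rule mat_of_fun_carrier)
  have w_carrier: "vec_of_fun xs w \<in> carrier_vec n" for w :: "'s \<Rightarrow> 'a"
    unfolding n_def vec_of_fun_def by simp
  have C: "?C \<in> carrier_mat n n"
    using carrier by (rule minus_carrier_mat)
  have eq: "mat_of_fun xs F *\<^sub>v vec_of_fun xs w = r \<cdot>\<^sub>v (?C *\<^sub>v vec_of_fun xs w) \<longleftrightarrow>
      (\<forall>s\<in>set xs. (\<Sum>t\<in>set xs. F s t * w t) = r * (w s - (\<Sum>t\<in>set xs. P s t * w t)))" for w
  proof -
    have "mat_of_fun xs F *\<^sub>v vec_of_fun xs w = r \<cdot>\<^sub>v (?C *\<^sub>v vec_of_fun xs w) \<longleftrightarrow>
        (\<forall>s\<in>set xs. (mat_of_fun xs F *\<^sub>v vec_of_fun xs w) $ index_of xs s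
          = (r \<cdot>\<^sub>v (?C *\<^sub>v vec_of_fun xs w)) $ index_of xs s)"
      by (rule vec_eq_iff_index_of[OF xs]) (use mult_mat_vec_carrier[OF carrier w_carrier] mult_mat_vec_carrier[OF C w_carrier] in \<open>auto simp: n_def\<close>)
    also have "\<dots> \<longleftrightarrow>
        (\<forall>s\<in>set xs. (\<Sum>t\<in>set xs. F s t * w t) = r * (w s - (\<Sum>t\<in>set xs. P s t * w t)))"
    proof (intro ball_cong refl)
      fix s
      assume s: "s \<in> set xs"
      have "(r \<cdot>\<^sub>v (?C *\<^sub>v vec_of_fun xs w)) $ index_of xs s = r * (?C *\<^sub>v vec_of_fun xs w) $ index_of xs s"
        by (subst index_smult_vec) (use index_of_less[OF xs s] C in \<open>auto simp: n_def\<close>)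
      then show "(mat_of_fun xs F *\<^sub>v vec_of_fun xs w) $ index_of xs s
          = (r \<cdot>\<^sub>v (?C *\<^sub>v vec_of_fun xs w)) $ index_of xs s \<longleftrightarrow>
        (\<Sum>t\<in>set xs. F s t * w t) = r * (w s - (\<Sum>t\<in>set xs. P s t * w t))"
        unfolding mat_of_fun_mult_vec_of_fun[OF xs s] one_minus_mat_of_fun_mult_vec_of_fun[OF xs s, folded n_def]
        by simp
    qed
    finally show ?thesis .
  qed
  have "(\<exists>v\<in>carrier_vec n. Q v) \<longleftrightarrow> (\<exists>w. Q (vec_of_fun xs w))" for Q :: "'a vec \<Rightarrow> bool"
  proof
    assume "\<exists>v\<in>carrier_vec n. Q v"
    then obtain v where v: "v \<in> carrier_vec n" "Q v"
      by blast
    then have "Q (vec_of_fun xs (\<lambda>s. v $ index_of xs s))"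
      using vec_of_fun_surj[OF xs v(1)[unfolded n_def]] by simp
    then show "\<exists>w. Q (vec_of_fun xs w)"
      by blast
  next
    assume "\<exists>w. Q (vec_of_fun xs w)"
    then show "\<exists>v\<in>carrier_vec n. Q v"
      using w_carrier by blast
  qed
  then have "eigenvalue (B * mat_of_fun xs F) r \<longleftrightarrow>
      (\<exists>w. vec_of_fun xs w \<noteq> 0\<^sub>v n \<and>
        mat_of_fun xs F *\<^sub>v vec_of_fun xs w = r \<cdot>\<^sub>v (?C *\<^sub>v vec_of_fun xs w))"
    using eigenvalue_inverse_mult_iff[OF B C carrier assms(4,5)] by simp
  then show ?thesis
    unfolding eq by (simp add: n_def vec_of_fun_eq_zero_iff)
qed

section \<open>The mean reproduction matrix\<close>

lemma set_hh_states: "set (hh_states h) = {(a, b). 1 \<le> a \<and> 1 \<le> b \<and> a + b \<le> h} \<union> {(0, 1)}"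
proof (intro equalityI subsetI)
  fix t
  assume "t \<in> {(a, b). 1 \<le> a \<and> 1 \<le> b \<and> a + b \<le> h} \<union> {(0, 1)}"
  then consider "t = (0, 1)" | a b where "t = (a, b)" "1 \<le> a" "1 \<le> b" "a + b \<le> h"
    by blast
  then show "t \<in> set (hh_states h)"
  proof cases
    case (2 a b)
    then have "a \<in> set [1..<h]" "b \<in> set [1..<h + 1 - a]"
      by auto
    then show ?thesis
      unfolding hh_states_def 2(1) by (auto intro!: bexI[of _ a])
  qed (simp add: hh_states_def)
qed (auto simp: hh_states_def)

lemma distinct_hh_states: "distinct (hh_states h)"
proof -
  have "x = y" if "map (Pair x) l = map (Pair y) l'" "l \<noteq> []" for x y :: nat and l l' :: "nat list"
    using that by (cases l; cases l') auto
  then show ?thesis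
    unfolding hh_states_def
    by (auto simp: distinct_map inj_on_def intro!: distinct_concat)
qed

lemma hh_states_cases:
  assumes "s \<in> set (hh_states h)"
  obtains "s = (0, 1)" | a b where "s = (a, b)" "1 \<le> a" "1 \<le> b" "a + b \<le> h"
  using assms unfolding set_hh_states by auto

text \<open>Row \<open>(a, b)\<close> of \<open>P\<close> is the jump chain of the household type seen by a fixed infective
  while it stays infectious: the next event is an infection, leading to \<open>infected_type a b\<close>,
  or the recovery of one of the other \<open>b - 1\<close> infectives.\<close>

definition infect_prob :: "real \<Rightarrow> real \<Rightarrow> nat \<Rightarrow> real" where
  "infect_prob lL g a = real a * lL / (real a * lL + g)"

definition other_recovery_prob :: "real \<Rightarrow> real \<Rightarrow> nat \<Rightarrow> nat \<Rightarrow> real" where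
  "other_recovery_prob lL g a b = (real b - 1) * g / (real b * (real a * lL + g))"

definition infected_type :: "nat \<Rightarrow> nat \<Rightarrow> nat \<times> nat" where
  "infected_type a b = (if a = 1 then (0, 1) else (a - 1, b + 1))"

lemma sum_if_eq_mult:
  fixes w :: "'a \<Rightarrow> 'b::semiring_0"
  assumes "finite A"
  shows "(\<Sum>t\<in>A. (if t = y then K else 0) * w t) = (if y \<in> A then K * w y else 0)"
  using assms by (simp add: if_distrib[of "\<lambda>x. x * _"] sum.delta cong: if_cong)

lemma p_entry_type:
  assumes "1 \<le> a"
  shows "p_entry lL g (a, b) t = (if t = infected_type a b then infect_prob lL g a else 0)
    + (if t = (a, b - 1) then other_recovery_prob lL g a b else 0)"
  using assms unfolding p_entry_def infect_prob_def other_recovery_prob_def infected_type_def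
  by (cases "a = 1"; cases "b \<ge> 2"; cases "b = 0") auto

lemma phi_entry_type:
  assumes "1 \<le> a"
  shows "phi_entry h lG lL g (a, b) t = (if t = infected_type a b then infect_prob lL g a / real b else 0)
    + (if t = (h - 1, 1) then lG / (real b * (real a * lL + g)) else 0)"
  using assms unfolding phi_entry_def infect_prob_def infected_type_def
  by (cases "a = 1") auto

lemma infected_type_in_hh_states:
  assumes "1 \<le> a" "1 \<le> b" "a + b \<le> h"
  shows "infected_type a b \<in> set (hh_states h)"
  using assms unfolding infected_type_def set_hh_states by auto

lemma p_entry_row_sum:
  assumes "1 \<le> a" "1 \<le> b" "a + b \<le> h"
  shows "(\<Sum>t\<in>set (hh_states h). p_entry lL g (a, b) t * w t)
       = infect_prob lL g a * w (infected_type a b) + other_recovery_prob lL g a b * w (a, b - 1)"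
proof -
  have "(a, b - 1) \<in> set (hh_states h) \<or> other_recovery_prob lL g a b = 0"
    using assms unfolding set_hh_states other_recovery_prob_def by auto
  then show ?thesis
    using infected_type_in_hh_states[OF assms]
    by (auto simp: p_entry_type[OF assms(1)] distrib_right sum.distrib sum_if_eq_mult)
qed

lemma phi_entry_row_sum:
  assumes "h \<ge> 2" "1 \<le> a" "1 \<le> b" "a + b \<le> h"
  shows "(\<Sum>t\<in>set (hh_states h). phi_entry h lG lL g (a, b) t * w t)
       = infect_prob lL g a / real b * w (infected_type a b) + lG / (real b * (real a * lL + g)) * w (h - 1, 1)"
proof -
  have "(h - 1, 1) \<in> set (hh_states h)"
    using assms(1) unfolding set_hh_states by auto
  then show ?thesis
    using infected_type_in_hh_states[OF assms(2-4)]
    by (simp add: phi_entry_type[OF assms(2)] distrib_right sum.distrib sum_if_eq_mult)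
qed

lemma p_entry_amalgamated_row_sum: "(\<Sum>t\<in>set (hh_states h). p_entry lL g (0, 1) t * w t) = 0"
  unfolding p_entry_def by simp

lemma phi_entry_amalgamated_row_sum:
  assumes "h \<ge> 2"
  shows "(\<Sum>t\<in>set (hh_states h). phi_entry h lG lL g (0, 1) t * w t) = lG / g * w (h - 1, 1)"
proof -
  have "(h - 1, 1) \<in> set (hh_states h)"
    using assms unfolding set_hh_states by auto
  then show ?thesis
    unfolding phi_entry_def by (simp add: sum_if_eq_mult)
qed

lemma type_recursion_zero:
  fixes x :: "nat \<times> nat \<Rightarrow> real"
  assumes x01: "x (0, 1) = 0"
    and rec: "\<And>a b. 1 \<le> a \<Longrightarrow> 1 \<le> b \<Longrightarrow> a + b \<le> h \<Longrightarrow>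
      x (a, b) = \<alpha> a b * x (infected_type a b) + \<beta> a b * x (a, b - 1)"
    and \<beta>: "\<And>a. \<beta> a 1 = 0"
  shows "1 \<le> a \<Longrightarrow> 1 \<le> b \<Longrightarrow> a + b \<le> h \<Longrightarrow> x (a, b) = 0"
proof (induction a arbitrary: b rule: less_induct)
  case (less a)
  have infected: "x (infected_type a b') = 0" if "1 \<le> b'" "a + b' \<le> h" for b'
    using x01 less.IH[of "a - 1" "b' + 1"] less.prems(1) that
    unfolding infected_type_def by auto
  show ?case
    using less.prems(2,3)
  proof (induction b)
    case (Suc b)
    then show ?case
      using rec[of a "Suc b"] less.prems(1) infected[of "Suc b"] \<beta>[of a]
      by (cases "b = 0") auto
  qed simp
qed

lemma P_mat_eq: "P_mat h lL g = mat_of_fun (hh_states h) (p_entry lL g)"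
  unfolding P_mat_def mat_of_fun_def Let_def ..

lemma Phi_mat_eq: "Phi_mat h lG lL g = mat_of_fun (hh_states h) (phi_entry h lG lL g)"
  unfolding Phi_mat_def mat_of_fun_def Let_def ..

lemma det_I_minus_P_mat_nonzero: "det (1\<^sub>m (length (hh_states h)) - P_mat h lL g) \<noteq> 0"
  unfolding P_mat_eq
proof (rule det_one_minus_mat_of_fun_nonzero[OF distinct_hh_states])
  fix w
  assume fixpoint: "\<forall>s\<in>set (hh_states h). w s = (\<Sum>t\<in>set (hh_states h). p_entry lL g s t * w t)"
  have w01: "w (0, 1) = 0"
    using fixpoint p_entry_amalgamated_row_sum by (simp add: set_hh_states)
  have rec: "w (a, b) = infect_prob lL g a * w (infected_type a b) + other_recovery_prob lL g a b * w (a, b - 1)"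
    if "1 \<le> a" "1 \<le> b" "a + b \<le> h" for a b
    using fixpoint p_entry_row_sum[OF that] that by (simp add: set_hh_states)
  have "other_recovery_prob lL g a 1 = 0" for a
    unfolding other_recovery_prob_def by simp
  note zero = type_recursion_zero[of w h, OF w01 rec this]
  show "\<forall>s\<in>set (hh_states h). w s = 0"
  proof
    fix s
    assume "s \<in> set (hh_states h)"
    then show "w s = 0"
    proof (cases rule: hh_states_cases)
      case 1
      then show ?thesis
        using w01 by simp
    qed (simp add: zero)
  qed
qed

lemma mat_inverse_I_minus_P_mat:
  fixes h :: nat and lL g :: real
  defines "n \<equiv> length (hh_states h)"
  obtains B where "mat_inverse (1\<^sub>m n - P_mat h lL g) = Some B"
    "(1\<^sub>m n - P_mat h lL g) * B = 1\<^sub>m n" "B * (1\<^sub>m n - P_mat h lL g) = 1\<^sub>m n" "B \<in> carrier_mat n n"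
proof (rule mat_inverse_if_det_nonzero)
  show "1\<^sub>m n - P_mat h lL g \<in> carrier_mat n n"
    unfolding P_mat_eq n_def using mat_of_fun_carrier by (rule minus_carrier_mat)
  show "det (1\<^sub>m n - P_mat h lL g) \<noteq> 0"
    unfolding n_def by (rule det_I_minus_P_mat_nonzero)
qed

lemma M_mat_carrier: "M_mat h lG lL g \<in> carrier_mat (length (hh_states h)) (length (hh_states h))"
proof -
  obtain B where B: "mat_inverse (1\<^sub>m (length (hh_states h)) - P_mat h lL g) = Some B"
    "B \<in> carrier_mat (length (hh_states h)) (length (hh_states h))"
    using mat_inverse_I_minus_P_mat by metis
  show ?thesis
    unfolding M_mat_def Let_def Phi_mat_eq B(1)
    using mult_carrier_mat[OF B(2) mat_of_fun_carrier] by simp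
qed

lemma eigenvalue_M_mat_iff_eigen_eq:
  "eigenvalue (M_mat h lG lL g) r \<longleftrightarrow>
    (\<exists>w. (\<exists>s\<in>set (hh_states h). w s \<noteq> 0) \<and>
      (\<forall>s\<in>set (hh_states h). (\<Sum>t\<in>set (hh_states h). phi_entry h lG lL g s t * w t)
        = r * (w s - (\<Sum>t\<in>set (hh_states h). p_entry lL g s t * w t))))"
proof -
  let ?n = "length (hh_states h)"
  obtain B where B: "mat_inverse (1\<^sub>m ?n - P_mat h lL g) = Some B"
    "(1\<^sub>m ?n - P_mat h lL g) * B = 1\<^sub>m ?n" "B * (1\<^sub>m ?n - P_mat h lL g) = 1\<^sub>m ?n" "B \<in> carrier_mat ?n ?n"
    by (rule mat_inverse_I_minus_P_mat)
  then have "M_mat h lG lL g = B * mat_of_fun (hh_states h) (phi_entry h lG lL g)"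
    unfolding M_mat_def Let_def Phi_mat_eq by simp
  then show ?thesis
    using eigenvalue_inverse_mult_mat_of_fun_iff[OF distinct_hh_states B(4)] B(2,3)
    unfolding P_mat_eq by simp
qed

definition eigen_recursion :: "nat \<Rightarrow> real \<Rightarrow> real \<Rightarrow> real \<Rightarrow> real \<Rightarrow> (nat \<times> nat \<Rightarrow> real) \<Rightarrow> bool" where
  "eigen_recursion h lG lL g z w \<longleftrightarrow> w (0, 1) = z * lG / g * w (h - 1, 1) \<and>
    (\<forall>a b. 1 \<le> a \<longrightarrow> 1 \<le> b \<longrightarrow> a + b \<le> h \<longrightarrow>
      w (a, b) = infect_prob lL g a * (1 + z / real b) * w (infected_type a b)
        + other_recovery_prob lL g a b * w (a, b - 1)
        + z * lG / (real b * (real a * lL + g)) * w (h - 1, 1))"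

lemma eigen_eq_iff_eigen_recursion:
  assumes "h \<ge> 2" "r * z = 1"
  shows "(\<forall>s\<in>set (hh_states h). (\<Sum>t\<in>set (hh_states h). phi_entry h lG lL g s t * w t)
        = r * (w s - (\<Sum>t\<in>set (hh_states h). p_entry lL g s t * w t)))
    \<longleftrightarrow> eigen_recursion h lG lL g z w"
proof -
  have scale: "X = r * Y \<longleftrightarrow> Y = z * X" for X Y
    using assms(2) by (auto simp: algebra_simps)
  have cancel: "r * (z * X) = X" for X
    using assms(2) by (simp add: mult.assoc[symmetric])
  have "(\<forall>s\<in>set (hh_states h). E s) \<longleftrightarrow>
      E (0, 1) \<and> (\<forall>a b. 1 \<le> a \<longrightarrow> 1 \<le> b \<longrightarrow> a + b \<le> h \<longrightarrow> E (a, b))" for E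
    unfolding set_hh_states by auto
  then show ?thesis
    using phi_entry_amalgamated_row_sum[OF assms(1)] p_entry_amalgamated_row_sum
      phi_entry_row_sum[OF assms(1)] p_entry_row_sum
    unfolding eigen_recursion_def by (simp add: scale algebra_simps add_divide_distrib cancel)
qed

lemma lineage_gf_type_rec:
  assumes "1 \<le> a" "1 \<le> b"
  shows "lineage_gf z lL g a b = g / (real b * (real a * lL + g))
    + infect_prob lL g a * (1 + z / real b) * case_prod (lineage_gf z lL g) (infected_type a b)
    + other_recovery_prob lL g a b * lineage_gf z lL g a (b - 1)"
  using lineage_gf_rec[of a b z lL g] assms
  unfolding infect_prob_def other_recovery_prob_def infected_type_def
  by (cases "a = 1") (auto simp: algebra_simps)

lemma eigen_recursion_lineage_gf:
  assumes "g \<noteq> 0" and root: "z * lG / g * lineage_gf z lL g (h - 1) 1 = 1"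
  shows "eigen_recursion h lG lL g z (case_prod (lineage_gf z lL g))"
  unfolding eigen_recursion_def
proof (intro conjI allI impI)
  show "case_prod (lineage_gf z lL g) (0, 1) = z * lG / g * case_prod (lineage_gf z lL g) (h - 1, 1)"
    using root by simp
  have "z * lG * lineage_gf z lL g (h - 1) 1 = g"
    using root assms(1) by (simp add: field_simps)
  then have source: "z * lG / (real b * (real a * lL + g)) * lineage_gf z lL g (h - 1) 1
      = g / (real b * (real a * lL + g))" for a b
    by (simp only: times_divide_eq_left)
  fix a b
  assume "1 \<le> a" "1 \<le> b" "a + b \<le> h"
  then show "case_prod (lineage_gf z lL g) (a, b) =
      infect_prob lL g a * (1 + z / real b) * case_prod (lineage_gf z lL g) (infected_type a b)
      + other_recovery_prob lL g a b * case_prod (lineage_gf z lL g) (a, b - 1)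
      + z * lG / (real b * (real a * lL + g)) * case_prod (lineage_gf z lL g) (h - 1, 1)"
    unfolding case_prod_conv source using lineage_gf_type_rec[of a b z lL g] by linarith
qed

text \<open>The inhomogeneous term of the recursion for \<open>lineage_gf\<close> is matched by that of
  \<open>eigen_recursion\<close> after scaling by \<open>K\<close>, so \<open>w - K * lineage_gf\<close> solves the homogeneous
  triangular recursion and vanishes.\<close>

lemma eigen_recursion_eq_lineage_gf:
  assumes "eigen_recursion h lG lL g z w" "g \<noteq> 0" "s \<in> set (hh_states h)"
  shows "w s = z * lG / g * w (h - 1, 1) * case_prod (lineage_gf z lL g) s"
proof -
  define K where "K = z * lG / g * w (h - 1, 1)"
  define V where "V = case_prod (lineage_gf z lL g)"
  have w01: "w (0, 1) = K"
    using assms(1) unfolding eigen_recursion_def K_def by blast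
  have w_rec: "w (a, b) = infect_prob lL g a * (1 + z / real b) * w (infected_type a b)
        + other_recovery_prob lL g a b * w (a, b - 1)
        + z * lG / (real b * (real a * lL + g)) * w (h - 1, 1)"
    if "1 \<le> a" "1 \<le> b" "a + b \<le> h" for a b
    using assms(1) that unfolding eigen_recursion_def by blast
  have Kg: "K * g = z * lG * w (h - 1, 1)"
    unfolding K_def using assms(2) by simp
  have zero: "w (a, b) - K * V (a, b) = 0" if "1 \<le> a" "1 \<le> b" "a + b \<le> h" for a b
  proof (rule type_recursion_zero[where x = "\<lambda>t. w t - K * V t", OF _ _ _ that])
    show "w (0, 1) - K * V (0, 1) = 0"
      unfolding w01 V_def by simp
    show "w (a', b') - K * V (a', b') = infect_prob lL g a' * (1 + z / real b') *
        (w (infected_type a' b') - K * V (infected_type a' b'))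
        + other_recovery_prob lL g a' b' * (w (a', b' - 1) - K * V (a', b' - 1))"
      if "1 \<le> a'" "1 \<le> b'" "a' + b' \<le> h" for a' b'
      using Kg unfolding w_rec[OF that] V_def lineage_gf_type_rec[OF that(1,2)] case_prod_conv
      by (simp add: algebra_simps add_divide_distrib)
    show "other_recovery_prob lL g a' 1 = 0" for a'
      unfolding other_recovery_prob_def by simp
  qed
  show ?thesis
    using assms(3)
  proof (cases rule: hh_states_cases)
    case 1
    then show ?thesis
      using w01 unfolding K_def by simp
  next
    case (2 a b)
    then show ?thesis
      using zero[OF 2(2-4)] unfolding K_def V_def by simp
  qed
qed

lemma eigenvalue_M_mat_iff:
  assumes "h \<ge> 2" "g \<noteq> 0" "r \<noteq> 0"
  shows "eigenvalue (M_mat h lG lL g) r \<longleftrightarrow> lG / (g * r) * lineage_gf (1 / r) lL g (h - 1) 1 = 1"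
proof -
  define z where "z = 1 / r"
  have rz: "r * z = 1"
    unfolding z_def using assms(3) by simp
  have types: "(0, 1) \<in> set (hh_states h)" "(h - 1, 1) \<in> set (hh_states h)"
    using assms(1) unfolding set_hh_states by auto
  have "(\<exists>w. (\<exists>s\<in>set (hh_states h). w s \<noteq> 0) \<and> eigen_recursion h lG lL g z w)
      \<longleftrightarrow> z * lG / g * lineage_gf z lL g (h - 1) 1 = 1"
  proof
    assume "\<exists>w. (\<exists>s\<in>set (hh_states h). w s \<noteq> 0) \<and> eigen_recursion h lG lL g z w"
    then obtain w s where w: "eigen_recursion h lG lL g z w" and s: "s \<in> set (hh_states h)" "w s \<noteq> 0"
      by blast
    note w_eq = eigen_recursion_eq_lineage_gf[OF w assms(2)]
    have "w (h - 1, 1) \<noteq> 0"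
      using w_eq[OF s(1)] s(2) by auto
    moreover have "w (h - 1, 1) = w (h - 1, 1) * (z * lG / g * lineage_gf z lL g (h - 1) 1)"
      by (subst (1) w_eq[OF types(2)]) (simp add: ac_simps)
    then have "w (h - 1, 1) = 0 \<or> z * lG / g * lineage_gf z lL g (h - 1) 1 = 1"
      by (rule mult_cancel_left1[THEN iffD1])
    ultimately show "z * lG / g * lineage_gf z lL g (h - 1) 1 = 1"
      by blast
  next
    assume "z * lG / g * lineage_gf z lL g (h - 1) 1 = 1"
    then have "eigen_recursion h lG lL g z (case_prod (lineage_gf z lL g))"
      by (rule eigen_recursion_lineage_gf[OF assms(2)])
    moreover have "case_prod (lineage_gf z lL g) (0, 1) \<noteq> 0"
      by simp
    ultimately show "\<exists>w. (\<exists>s\<in>set (hh_states h). w s \<noteq> 0) \<and> eigen_recursion h lG lL g z w"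
      using types(1) by blast
  qed
  moreover have "lG / (g * r) * lineage_gf (1 / r) lL g (h - 1) 1 = z * lG / g * lineage_gf z lL g (h - 1) 1"
    unfolding z_def by simp
  ultimately show ?thesis
    unfolding eigenvalue_M_mat_iff_eigen_eq eigen_eq_iff_eigen_recursion[OF assms(1) rz] by (simp only:)
qed

section \<open>Equality of the maximal eigenvalues\<close>

lemma Max_eq_if_agree_above:
  fixes A B :: "'a::linorder set"
  assumes "finite A" "finite B" "x \<in> A" "\<And>y. x \<le> y \<Longrightarrow> y \<in> A \<longleftrightarrow> y \<in> B"
  shows "Max A = Max B"
proof -
  have "x \<in> B"
    using assms(3,4) by blast
  then have "x \<le> Max A" "x \<le> Max B"
    using assms(1-3) by simp_all
  moreover have "Max A \<in> A" "Max B \<in> B"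
    using assms(1-3) \<open>x \<in> B\<close> by (auto intro: Max_in)
  ultimately have "Max A \<in> B" "Max B \<in> A"
    using assms(4) by blast+
  then show ?thesis
    using assms(1,2) by (simp add: antisym)
qed

theorem mainTheorem3:
  fixes h :: nat and lG lL g :: real
  assumes "h \<ge> 2" and "lG > 0" and "lL > 0" and "g > 0"
  shows "max_eigenvalue (M_mat h lG lL g) = max_eigenvalue (A_mat h lG lL g)"
proof -
  have same_positive: "eigenvalue (M_mat h lG lL g) r \<longleftrightarrow> eigenvalue (A_mat h lG lL g) r" if "r > 0" for r
    using eigenvalue_M_mat_iff[of h g r lG lL] eigenvalue_A_mat_iff[of h lL g r lG] assms that by simp
  obtain r0 where "r0 > 0" "lG / (g * r0) * lineage_gf (1 / r0) lL g (h - 1) 1 = 1"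
    using lineage_gf_root[OF assms] by blast
  then have "eigenvalue (M_mat h lG lL g) r0"
    using assms by (subst eigenvalue_M_mat_iff) auto
  have "A_mat h lG lL g \<in> carrier_mat h h"
    unfolding A_mat_def by simp
  show ?thesis
    unfolding max_eigenvalue_def
  proof (rule Max_eq_if_agree_above)
    show "finite {r. eigenvalue (M_mat h lG lL g) r}"
      using M_mat_carrier by (rule finite_eigenvalues)
    show "finite {r. eigenvalue (A_mat h lG lL g) r}"
      using \<open>A_mat h lG lL g \<in> carrier_mat h h\<close> by (rule finite_eigenvalues)
    show "r0 \<in> {r. eigenvalue (M_mat h lG lL g) r}"
      using \<open>eigenvalue (M_mat h lG lL g) r0\<close> by simp
    show "y \<in> {r. eigenvalue (M_mat h lG lL g) r} \<longleftrightarrow> y \<in> {r. eigenvalue (A_mat h lG lL g) r}"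
      if "r0 \<le> y" for y
      using same_positive[of y] that \<open>r0 > 0\<close> by simp
  qed
qed

end
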